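(* Let $\mathcal{M}\subseteq\mathbb{S}^n$ be compact. Then $\mathcal{S}(\mathcal{M})$ is rank-one generated if and only if $\mathcal{S}(\mathcal{M})\cap\mathcal{T}(\mathcal{M}')$ is rank-one generated for every nonempty $\mathcal{M}'\subseteq\mathcal{M}$.
   Context: $\mathbb{S}^n$ denotes real symmetric $n\times n$ matrices with $\langle A,B\rangle=\mathrm{tr}(AB)$, $\mathbb{S}^n_+$ the PSD cone. For $\mathcal{M}\subseteq\mathbb{S}^n$, $\mathcal{S}(\mathcal{M})=\{X\in\mathbb{S}^n_+:\langle M,X\rangle\ge0\ \forall M\in\mathcal{M}\}$ and $\mathcal{T}(\mathcal{M})=\{X\in\mathbb{S}^n_+:\langle M,X\rangle=0\ \forall M\in\mathcal{M}\}$. A closed convex cone $\mathcal{S}\subseteq\mathbb{S}^n_+$ is rank-one generated (ROG) if $\mathcal{S}=\mathrm{conv}(\mathcal{S}\cap\{xx^\top:x\in\mathbb{R}^n\})$. *)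

theory Defs
  imports "HOL-Analysis.Analysis"
begin

type_synonym 'n mat = "real^'n^'n"

definition sym_mats :: "'n::finite mat set" where
  "sym_mats = {A. transpose A = A}"

definition psd_cone :: "'n::finite mat set" where
  "psd_cone = {X. transpose X = X \<and> (\<forall>x::real^'n. 0 \<le> x \<bullet> (X *v x))}"

definition frob :: "'n::finite mat \<Rightarrow> 'n mat \<Rightarrow> real" where
  "frob A B = trace (A ** B)"

definition outer :: "real^'n \<Rightarrow> real^'n^'n" where
  "outer x = (\<chi> i j. x $ i * x $ j)"

definition rank_one_mats :: "'n::finite mat set" where
  "rank_one_mats = range outer"

definition Scone :: "'n::finite mat set \<Rightarrow> 'n mat set" where
  "Scone M = {X \<in> psd_cone. \<forall>A\<in>M. frob A X \<ge> 0}"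

definition Tcone :: "'n::finite mat set \<Rightarrow> 'n mat set" where
  "Tcone M = {X \<in> psd_cone. \<forall>A\<in>M. frob A X = 0}"

definition ROG :: "'n::finite mat set \<Rightarrow> bool" where
  "ROG S \<longleftrightarrow> closed S \<and> convex S \<and> cone S \<and> S \<subseteq> psd_cone
     \<and> S = convex hull (S \<inter> rank_one_mats)"

end

theory Submission
  imports Defs
begin

(*
  If S(M) is rank-one generated and M' is a subset of M, then S(M) \<inter> T(M') is an exposed face
  of S(M): writing X \<in> T(M') as a convex combination of rank-one elements of S(M), each
  functional <A, _> with A \<in> M' is nonnegative on the summands and vanishes on their
  combination, hence vanishes on every summand of positive weight.

  Conversely, every PSD matrix is a finite sum of matrices x x^T, and we induct on the number of
  summands. Write X \<in> S(M) as Y + Z with Y = v v^T and Z a shorter sum; the midpoint m of Y and Z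
  lies in S(M). Moving along the PSD segment from m towards Z, one either reaches Z inside S(M)
  (then use induction) or leaves S(M) at a point where some <A, _> with A \<in> M vanishes; such an
  exit point exists because, M being compact, strict positivity of all <A, _> is an open
  condition. Exit points lie in a face S(M) \<inter> T({A}), which is rank-one generated by hypothesis.
  Doing the same towards Y places m between two points of the convex hull of the rank-one
  elements of S(M), and X = 2 m.
*)

lemma frob_eq_inner: "frob A X = transpose A \<bullet> X"
  by (simp add: frob_def trace_def matrix_matrix_mult_def transpose_def inner_vec_def)
     (subst sum.swap, simp add: mult.commute)

lemma linear_frob: "linear (frob A)"
  unfolding frob_eq_inner[abs_def] by (rule bounded_linear.linear[OF bounded_linear_inner_right])

lemma frob_uminus_left [simp]: "frob (- A) X = - frob A X"
  by (simp add: frob_def trace_def matrix_matrix_mult_def sum_negf)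

lemma transpose_zero [simp]: "transpose 0 = 0"
  by (simp add: transpose_def vec_eq_iff)

lemma transpose_add: "transpose (X + Y) = transpose X + transpose Y"
  by (simp add: transpose_def vec_eq_iff)

lemma transpose_diff: "transpose (X - Y) = transpose X - transpose Y"
  by (simp add: transpose_def vec_eq_iff)

lemma transpose_outer [simp]: "transpose (outer x) = outer x"
  by (simp add: outer_def transpose_def vec_eq_iff mult.commute)

lemma outer_inner: "outer x \<bullet> X = x \<bullet> (X *v x)"
  by (simp add: outer_def inner_vec_def matrix_vector_mult_def sum_distrib_left mult_ac)

lemma outer_mult_vec: "outer v *v x = (v \<bullet> x) *\<^sub>R v"
  by (simp add: outer_def matrix_vector_mult_def inner_vec_def vec_eq_iff sum_distrib_left
      sum_distrib_right algebra_simps)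

lemma outer_quadratic_form: "x \<bullet> (outer v *v x) = (v \<bullet> x)\<^sup>2"
  by (simp add: outer_mult_vec power2_eq_square inner_commute)

lemma outer_scaleR: "outer (c *\<^sub>R v) = c\<^sup>2 *\<^sub>R outer v"
  by (simp add: outer_def vec_eq_iff power2_eq_square mult_ac)

lemma quadratic_form_axis: "axis i 1 \<bullet> (X *v axis i 1) = X $ i $ i"
  by (simp add: matrix_vector_mult_basis column_def inner_axis')

lemma symmetric_quadratic_form_commute:
  fixes X :: "real^'n^'n"
  assumes "transpose X = X"
  shows "x \<bullet> (X *v y) = y \<bullet> (X *v x)"
  by (metis assms dot_lmul_matrix inner_commute transpose_matrix_vector)

lemma psd_cone_eq: "psd_cone = {X. transpose X = X} \<inter> (\<Inter>x. {X. 0 \<le> outer x \<bullet> X})"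
  by (auto simp: psd_cone_def outer_inner)

lemma Scone_eq: "Scone M = psd_cone \<inter> (\<Inter>A\<in>M. {X. 0 \<le> transpose A \<bullet> X})"
  by (auto simp: Scone_def frob_eq_inner)

lemma closed_symmetric: "closed {X :: real^'n^'n. transpose X = X}"
  unfolding transpose_def by (intro closed_Collect_eq continuous_intros)

lemma closed_Scone: "closed (Scone M)"
  unfolding Scone_eq psd_cone_eq
  by (intro closed_Int closed_INT closed_symmetric closed_halfspace_ge ballI)

lemma convex_cone_Scone: "convex_cone (Scone M)"
  unfolding convex_cone_iff Scone_eq psd_cone_eq
  by (auto simp: inner_add_right transpose_add transpose_scalar)

lemma convex_Scone: "convex (Scone M)"
  using convex_cone_Scone unfolding convex_cone_def by blast

lemma cone_Scone: "cone (Scone M)"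
  using convex_cone_Scone unfolding convex_cone_iff cone_def by blast

lemma convex_cone_psd_cone: "convex_cone psd_cone"
  using convex_cone_Scone[of "{}"] by (simp add: Scone_def)

lemma convex_psd_cone: "convex psd_cone"
  using convex_cone_psd_cone unfolding convex_cone_def by blast

lemma Scone_Int_Tcone:
  fixes M M' :: "(real^'n^'n) set"
  shows "Scone M \<inter> Tcone M' = Scone (M \<union> M' \<union> uminus ` M')"
proof (rule set_eqI)
  fix X
  have "frob A X = 0 \<longleftrightarrow> 0 \<le> frob A X \<and> 0 \<le> frob (- A) X" for A :: "real^'n^'n"
    by auto
  then show "X \<in> Scone M \<inter> Tcone M' \<longleftrightarrow> X \<in> Scone (M \<union> M' \<union> uminus ` M')"
    unfolding Scone_def Tcone_def by blast
qed

lemma outer_in_psd_cone: "outer v \<in> psd_cone"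
  by (simp add: psd_cone_def outer_quadratic_form)

lemma sum_outer_in_psd_cone: "sum_list (map outer vs) \<in> psd_cone"
  by (induction vs) (simp_all add: convex_cone_contains_0 convex_cone_add convex_cone_psd_cone
      outer_in_psd_cone)

lemma cone_rank_one_mats: "cone rank_one_mats"
proof (unfold cone_def rank_one_mats_def, intro ballI allI impI)
  fix X and c :: real
  assume "X \<in> range outer" "0 \<le> c"
  then obtain v where "X = outer v"
    by blast
  then have "c *\<^sub>R X = outer (sqrt c *\<^sub>R v)"
    using \<open>0 \<le> c\<close> by (simp add: outer_scaleR)
  then show "c *\<^sub>R X \<in> range outer"
    by simp
qed

lemma ROG_iff_subset_hull:
  assumes "closed S" "convex S" "cone S" "S \<subseteq> psd_cone"
  shows "ROG S \<longleftrightarrow> S \<subseteq> convex hull (S \<inter> rank_one_mats)"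
proof -
  have "convex hull (S \<inter> rank_one_mats) \<subseteq> S"
    using \<open>convex S\<close> by (intro hull_minimal) auto
  then show ?thesis
    using assms unfolding ROG_def by blast
qed

lemma ROG_Scone_iff: "ROG (Scone M) \<longleftrightarrow> Scone M \<subseteq> convex hull (Scone M \<inter> rank_one_mats)"
  by (rule ROG_iff_subset_hull[OF closed_Scone convex_Scone cone_Scone]) (auto simp: Scone_def)

lemma nonneg_quadratic_imp_discrim_le:
  fixes q r d :: real
  assumes nonneg: "\<And>t. 0 \<le> q - 2 * t * r + t\<^sup>2 * d" and "0 \<le> d"
  shows "r\<^sup>2 \<le> d * q"
proof (cases "d = 0")
  case True
  have "r = 0"
  proof (rule ccontr)
    assume "r \<noteq> 0"
    then show False
      using nonneg[of "(q + 1) / (2 * r)"] True by (simp add: field_simps)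
  qed
  then show ?thesis
    using nonneg[of 0] True by simp
next
  case False
  then have "0 < d"
    using \<open>0 \<le> d\<close> by simp
  have "0 \<le> q - 2 * (r / d) * r + (r / d)\<^sup>2 * d"
    by (rule nonneg)
  also have "\<dots> = (d * q - r\<^sup>2) / d"
    using \<open>0 < d\<close> by (simp add: field_simps power2_eq_square)
  finally show ?thesis
    using \<open>0 < d\<close> by (simp add: zero_le_divide_iff)
qed

lemma psd_cone_diag_nonneg:
  assumes "X \<in> psd_cone"
  shows "0 \<le> X $ i $ i"
proof -
  have "0 \<le> axis i 1 \<bullet> (X *v axis i 1)"
    using assms unfolding psd_cone_def by blast
  then show ?thesis
    by (simp only: quadratic_form_axis)
qed

lemma psd_cone_entry_bound:
  fixes X :: "real^'n^'n"
  assumes "X \<in> psd_cone"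
  shows "((X *v x) $ i)\<^sup>2 \<le> X $ i $ i * (x \<bullet> (X *v x))"
proof (rule nonneg_quadratic_imp_discrim_le)
  let ?e = "axis i 1 :: real^'n"
  have sym: "transpose X = X" and nonneg: "\<And>y. 0 \<le> y \<bullet> (X *v y)"
    using assms by (auto simp: psd_cone_def)
  have e_left: "?e \<bullet> (X *v y) = (X *v y) $ i" for y
    by (simp add: inner_axis')
  have e_right: "x \<bullet> (X *v ?e) = (X *v x) $ i"
    using symmetric_quadratic_form_commute[OF sym] e_left by metis
  show "0 \<le> X $ i $ i"
    using assms by (rule psd_cone_diag_nonneg)
  show "0 \<le> x \<bullet> (X *v x) - 2 * t * (X *v x) $ i + t\<^sup>2 * X $ i $ i" for t
  proof -
    have "0 \<le> (x - t *\<^sub>R ?e) \<bullet> (X *v (x - t *\<^sub>R ?e))"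
      by (rule nonneg)
    also have "\<dots> = x \<bullet> (X *v x) - t * (?e \<bullet> (X *v x)) - t * (x \<bullet> (X *v ?e))
        + t\<^sup>2 * (?e \<bullet> (X *v ?e))"
      by (simp add: matrix_vector_mult_diff_distrib inner_diff_left inner_diff_right
          scaleR_matrix_vector_assoc[symmetric] power2_eq_square algebra_simps)
    finally show ?thesis
      by (simp add: e_left e_right quadratic_form_axis algebra_simps)
  qed
qed

lemma psd_cone_entry_sq_le:
  assumes "X \<in> psd_cone"
  shows "(X $ i $ j)\<^sup>2 \<le> X $ i $ i * X $ j $ j"
  using psd_cone_entry_bound[OF assms, of "axis j 1" i]
  unfolding quadratic_form_axis by (simp add: matrix_vector_mult_basis column_def)

lemma psd_cone_zero_diag:
  assumes "X \<in> psd_cone" "X $ j $ j = 0"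
  shows "X $ i $ j = 0"
  using psd_cone_entry_sq_le[OF assms(1), of i j] assms(2) by simp

lemma psd_cone_minus_outer_row:
  fixes X :: "real^'n^'n"
  assumes X: "X \<in> psd_cone" and pos: "0 < X $ i $ i"
  shows "X - outer ((1 / sqrt (X $ i $ i)) *\<^sub>R X $ i) \<in> psd_cone"
proof -
  let ?d = "X $ i $ i"
  have outer_eq: "outer ((1 / sqrt ?d) *\<^sub>R X $ i) = (1 / ?d) *\<^sub>R outer (X $ i)"
    using pos by (simp add: outer_scaleR power_divide)
  have "0 \<le> x \<bullet> ((X - outer ((1 / sqrt ?d) *\<^sub>R X $ i)) *v x)" for x
  proof -
    have "((X *v x) $ i)\<^sup>2 / ?d \<le> x \<bullet> (X *v x)"
      using psd_cone_entry_bound[OF X, of x i] pos by (simp add: divide_le_eq mult.commute)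
    then show ?thesis
      by (simp add: outer_eq matrix_vector_mult_diff_rdistrib inner_diff_right
          scaleR_matrix_vector_assoc[symmetric] outer_quadratic_form matrix_vector_mul_component
          inner_commute)
  qed
  moreover have "transpose X = X"
    using X by (simp add: psd_cone_def)
  ultimately show ?thesis
    by (simp add: psd_cone_def transpose_diff transpose_outer)
qed

text \<open>Subtracting the outer product of the scaled i-th row clears row and column i and keeps
  zero diagonal entries zero, so the number of nonzero diagonal entries drops.\<close>

lemma psd_cone_eq_sum_outer:
  fixes X :: "real^'n^'n"
  assumes "X \<in> psd_cone"
  obtains vs where "X = sum_list (map outer vs)"
  using assms
proof (induction "card {i. X $ i $ i \<noteq> 0}" arbitrary: X thesis rule: less_induct)
  case less
  show ?case
  proof (cases "\<exists>i. X $ i $ i \<noteq> 0")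
    case False
    then have "X = 0"
      using psd_cone_zero_diag[OF less.prems(2)] by (simp add: vec_eq_iff)
    then show ?thesis
      using less.prems(1)[of "[]"] by simp
  next
    case True
    then obtain i where "X $ i $ i \<noteq> 0"
      by blast
    then have pos: "0 < X $ i $ i"
      using psd_cone_diag_nonneg[OF less.prems(2)] by (simp add: order_less_le)
    define v where "v = (1 / sqrt (X $ i $ i)) *\<^sub>R X $ i"
    define X' where "X' = X - outer v"
    have X': "X' \<in> psd_cone"
      unfolding X'_def v_def using less.prems(2) pos by (rule psd_cone_minus_outer_row)
    have diag: "X' $ j $ j = X $ j $ j - (X $ i $ j)\<^sup>2 / X $ i $ i" for j
      using pos by (simp add: X'_def v_def outer_def power2_eq_square)
    have "{j. X' $ j $ j \<noteq> 0} \<subseteq> {j. X $ j $ j \<noteq> 0} - {i}"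
      using pos psd_cone_zero_diag[OF less.prems(2), of _ i] by (auto simp: diag power2_eq_square)
    then have "card {j. X' $ j $ j \<noteq> 0} < card {j. X $ j $ j \<noteq> 0}"
      using \<open>X $ i $ i \<noteq> 0\<close> by (intro psubset_card_mono) auto
    then obtain vs where "X' = sum_list (map outer vs)"
      using less.hyps X' by blast
    then show ?thesis
      using less.prems(1)[of "v # vs"] by (simp add: X'_def algebra_simps)
  qed
qed

lemma convex_hull_Int_zero_set:
  fixes f :: "'i \<Rightarrow> 'a::real_vector \<Rightarrow> real"
  assumes lin: "\<And>i. i \<in> I \<Longrightarrow> linear (f i)"
    and nonneg: "\<And>i w. i \<in> I \<Longrightarrow> w \<in> K \<Longrightarrow> 0 \<le> f i w"
    and X: "X \<in> convex hull K" and zero: "\<And>i. i \<in> I \<Longrightarrow> f i X = 0"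
  shows "X \<in> convex hull {w \<in> K. \<forall>i\<in>I. f i w = 0}"
proof -
  obtain S u where S: "finite S" "S \<subseteq> K" and u: "\<forall>w\<in>S. 0 \<le> u w" "sum u S = 1"
    and X_eq: "(\<Sum>w\<in>S. u w *\<^sub>R w) = X"
    using X unfolding convex_hull_explicit by blast
  define S' where "S' = {w \<in> S. u w \<noteq> 0}"
  have "f i w = 0" if i: "i \<in> I" and w: "w \<in> S'" for i w
  proof -
    have "(\<Sum>v\<in>S. u v * f i v) = 0"
      using lin[OF i] zero[OF i] unfolding X_eq[symmetric] by (simp add: linear_sum linear_scale)
    then have "\<forall>v\<in>S. u v * f i v = 0"
      using sum_nonneg_eq_0_iff[OF S(1)] u(1) nonneg[OF i] S(2) by (meson mult_nonneg_nonneg subsetD)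
    with w show ?thesis
      by (auto simp: S'_def)
  qed
  then have S'_sub: "S' \<subseteq> {w \<in> K. \<forall>i\<in>I. f i w = 0}"
    using S(2) by (auto simp: S'_def)
  have "sum u S' = sum u S" "(\<Sum>w\<in>S'. u w *\<^sub>R w) = (\<Sum>w\<in>S. u w *\<^sub>R w)"
    by (rule sum.mono_neutral_left[OF S(1)]; auto simp: S'_def)+
  moreover have "finite S'" "\<forall>w\<in>S'. 0 \<le> u w"
    using S(1) u(1) by (simp_all add: S'_def)
  ultimately show ?thesis
    using S'_sub u(2) X_eq unfolding convex_hull_explicit by (intro CollectI exI[of _ S'] exI[of _ u]) simp
qed

lemma ROG_Scone_Int_Tcone:
  fixes M M' :: "(real^'n^'n) set"
  assumes "ROG (Scone M)" "M' \<subseteq> M"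
  shows "ROG (Scone M \<inter> Tcone M')"
proof -
  let ?K = "Scone M \<inter> rank_one_mats"
  have "X \<in> convex hull (Scone M \<inter> Tcone M' \<inter> rank_one_mats)" if X: "X \<in> Scone M \<inter> Tcone M'" for X
  proof -
    have "X \<in> convex hull ?K"
      using assms(1) X unfolding ROG_def by blast
    then have "X \<in> convex hull {W \<in> ?K. \<forall>A\<in>M'. frob A W = 0}"
      using X assms(2) by (intro convex_hull_Int_zero_set linear_frob) (auto simp: Scone_def Tcone_def)
    also have "{W \<in> ?K. \<forall>A\<in>M'. frob A W = 0} = Scone M \<inter> Tcone M' \<inter> rank_one_mats"
      by (auto simp: Scone_def Tcone_def)
    finally show ?thesis .
  qed
  then show ?thesis
    unfolding Scone_Int_Tcone ROG_Scone_iff by blast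
qed

lemma open_Collect_forall_compact_pos:
  fixes f :: "'a::euclidean_space \<Rightarrow> 'b::euclidean_space \<Rightarrow> real"
  assumes "compact K" and "continuous_on UNIV (\<lambda>(a, x). f a x)"
  shows "open {x. \<forall>a\<in>K. 0 < f a x}"
proof -
  have "closed {(a, x). f a x \<le> 0}"
    using closed_Collect_le[OF assms(2) continuous_on_const] by (simp add: case_prod_unfold)
  then have "closed {x. \<exists>a. a \<in> K \<and> (a, x) \<in> {(a, x). f a x \<le> 0}}"
    by (rule closed_compact_projection[OF assms(1)])
  moreover have "- {x. \<forall>a\<in>K. 0 < f a x} = {x. \<exists>a. a \<in> K \<and> (a, x) \<in> {(a, x). f a x \<le> 0}}"
    by auto
  ultimately show ?thesis
    unfolding open_closed by (simp only:)
qed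

lemma open_Collect_frob_pos: "compact M \<Longrightarrow> open {X. \<forall>A\<in>M. 0 < frob A X}"
  unfolding frob_eq_inner transpose_def
  by (intro open_Collect_forall_compact_pos) (auto simp: case_prod_unfold intro!: continuous_intros)

lemma connected_leaves_closed_outside_open:
  assumes "connected L" "closed C" "open U" "L \<inter> U \<subseteq> C"
    and "m \<in> L \<inter> C" "z \<in> L - C"
  obtains p where "p \<in> L \<inter> C" "p \<notin> U"
proof -
  have "\<exists>p \<in> L \<inter> C. p \<notin> U"
  proof (rule ccontr)
    assume "\<not> (\<exists>p \<in> L \<inter> C. p \<notin> U)"
    then have "L \<subseteq> U \<union> - C"
      by blast
    moreover have "U \<inter> - C \<inter> L = {}"
      using \<open>L \<inter> U \<subseteq> C\<close> by blast
    ultimately have "U \<inter> L = {} \<or> - C \<inter> L = {}"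
      using connectedD[OF \<open>connected L\<close> \<open>open U\<close>] \<open>closed C\<close> by (simp add: open_Compl)
    then show False
      using \<open>m \<in> L \<inter> C\<close> \<open>z \<in> L - C\<close> \<open>L \<inter> U \<subseteq> C\<close> \<open>L \<subseteq> U \<union> - C\<close> by blast
  qed
  then show ?thesis
    using that by blast
qed

lemma segment_meets_Scone_face:
  fixes Z W :: "real^'n^'n"
  assumes "compact M" "Z \<in> psd_cone" "W \<in> Scone M"
  obtains P where "P \<in> closed_segment Z W" "P \<in> Scone M" "P = Z \<or> (\<exists>A\<in>M. frob A P = 0)"
proof (cases "Z \<in> Scone M")
  case True
  then show ?thesis
    using that by blast
next
  case False
  let ?U = "{X. \<forall>A\<in>M. 0 < frob A X}"
  have "closed_segment Z W \<subseteq> psd_cone"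
    using assms(2,3) by (intro closed_segment_subset convex_psd_cone) (auto simp: Scone_def)
  then have "closed_segment Z W \<inter> ?U \<subseteq> Scone M"
    by (auto simp: Scone_def less_imp_le)
  then obtain P where P: "P \<in> closed_segment Z W \<inter> Scone M" "P \<notin> ?U"
    using connected_leaves_closed_outside_open[OF connected_segment closed_Scone
        open_Collect_frob_pos[OF \<open>compact M\<close>]] assms(3) False by blast
  then obtain A where "A \<in> M" "frob A P = 0"
    by (force simp: Scone_def)
  then show ?thesis
    using that P by blast
qed

lemma between_of_between_halves:
  fixes a b m p q :: "'a::euclidean_space"
  assumes "between (a, b) m" "between (a, m) p" "between (b, m) q"
  shows "between (p, q) m"
  using assms dist_triangle[of a b p] dist_triangle[of p b q] dist_triangle[of p q m]
  unfolding between by (simp add: dist_commute)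

lemma cone_hull_rank_one: "cone (convex hull (Scone M \<inter> rank_one_mats))"
  using cone_Scone cone_rank_one_mats by (intro cone_convex_hull) (auto simp: cone_def)

lemma face_subset_hull_rank_one:
  assumes "ROG (Scone M \<inter> Tcone {A})"
  shows "Scone M \<inter> Tcone {A} \<subseteq> convex hull (Scone M \<inter> rank_one_mats)"
proof -
  have "Scone M \<inter> Tcone {A} \<subseteq> convex hull (Scone M \<inter> Tcone {A} \<inter> rank_one_mats)"
    using assms unfolding ROG_def by blast
  also have "\<dots> \<subseteq> convex hull (Scone M \<inter> rank_one_mats)"
    by (rule hull_mono) blast
  finally show ?thesis .
qed

lemma segment_exit_mem_hull_rank_one:
  fixes M :: "(real^'n^'n) set"
  assumes "compact M" and faces: "\<And>A. A \<in> M \<Longrightarrow> ROG (Scone M \<inter> Tcone {A})"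
    and "E \<in> psd_cone" "W \<in> Scone M"
    and E_hull: "E \<in> Scone M \<Longrightarrow> E \<in> convex hull (Scone M \<inter> rank_one_mats)"
  obtains P where "between (E, W) P" "P \<in> convex hull (Scone M \<inter> rank_one_mats)"
proof (rule segment_meets_Scone_face[OF assms(1,3,4)])
  fix P
  assume P: "P \<in> closed_segment E W" "P \<in> Scone M" "P = E \<or> (\<exists>A\<in>M. frob A P = 0)"
  have "P \<in> convex hull (Scone M \<inter> rank_one_mats)"
  proof (cases "P = E")
    case True
    then show ?thesis
      using P(2) E_hull by simp
  next
    case False
    then obtain A where "A \<in> M" "P \<in> Scone M \<inter> Tcone {A}"
      using P(2,3) by (auto simp: Scone_def Tcone_def)
    then show ?thesis
      using face_subset_hull_rank_one[OF faces] by blast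
  qed
  then show thesis
    using that P(1) by (simp add: between_mem_segment)
qed

lemma sum_outer_mem_hull_rank_one:
  fixes M :: "(real^'n^'n) set"
  assumes "compact M" and faces: "\<And>A. A \<in> M \<Longrightarrow> ROG (Scone M \<inter> Tcone {A})"
  shows "sum_list (map outer vs) \<in> Scone M \<Longrightarrow>
    sum_list (map outer vs) \<in> convex hull (Scone M \<inter> rank_one_mats)"
proof (induction vs)
  case Nil
  have "outer 0 = 0"
    by (simp add: outer_def vec_eq_iff)
  then have "0 \<in> rank_one_mats"
    unfolding rank_one_mats_def by (metis rangeI)
  then show ?case
    using Nil by (intro hull_inc) simp
next
  case (Cons v vs)
  define Y where "Y = outer v"
  define Z where "Z = sum_list (map outer vs)"
  define m where "m = midpoint Y Z"
  have sum_eq: "sum_list (map outer (v # vs)) = 2 *\<^sub>R m"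
    by (simp add: Y_def Z_def m_def midpoint_def)
  have "m \<in> Scone M"
    using mem_cone[OF cone_Scone Cons.prems, of "1 / 2"] by (simp add: Y_def Z_def m_def midpoint_def)
  obtain p where p: "between (Z, m) p" "p \<in> convex hull (Scone M \<inter> rank_one_mats)"
    using segment_exit_mem_hull_rank_one[OF assms _ \<open>m \<in> Scone M\<close>] Cons.IH
    by (metis Z_def sum_outer_in_psd_cone)
  obtain q where q: "between (Y, m) q" "q \<in> convex hull (Scone M \<inter> rank_one_mats)"
    using segment_exit_mem_hull_rank_one[OF assms _ \<open>m \<in> Scone M\<close>]
    by (metis IntI Y_def hull_inc outer_in_psd_cone rangeI rank_one_mats_def)
  have "between (p, q) m"
    using between_of_between_halves[OF between_midpoint(2)[of Z Y]] p(1) q(1)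
    unfolding m_def .
  then have "m \<in> convex hull (Scone M \<inter> rank_one_mats)"
    using p(2) q(2) by (auto simp: between_mem_segment dest: closed_segment_subset[OF _ _ convex_convex_hull])
  then show ?case
    unfolding sum_eq by (simp add: mem_cone cone_hull_rank_one)
qed

lemma Scone_subset_hull_rank_one:
  fixes M :: "(real^'n^'n) set"
  assumes "compact M" and "\<And>A. A \<in> M \<Longrightarrow> ROG (Scone M \<inter> Tcone {A})"
  shows "Scone M \<subseteq> convex hull (Scone M \<inter> rank_one_mats)"
proof
  fix X
  assume "X \<in> Scone M"
  moreover obtain vs where "X = sum_list (map outer vs)"
    using \<open>X \<in> Scone M\<close> psd_cone_eq_sum_outer by (auto simp: Scone_def)
  ultimately show "X \<in> convex hull (Scone M \<inter> rank_one_mats)"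
    using sum_outer_mem_hull_rank_one[OF assms] by simp
qed

theorem lemma2p13:
  fixes M :: "(real^'n^'n) set"
  assumes "M \<subseteq> sym_mats" and "compact M"
  shows "ROG (Scone M) \<longleftrightarrow>
    (\<forall>M'. M' \<noteq> {} \<and> M' \<subseteq> M \<longrightarrow> ROG (Scone M \<inter> Tcone M'))"
proof
  assume "ROG (Scone M)"
  then show "\<forall>M'. M' \<noteq> {} \<and> M' \<subseteq> M \<longrightarrow> ROG (Scone M \<inter> Tcone M')"
    by (blast intro: ROG_Scone_Int_Tcone)
next
  assume "\<forall>M'. M' \<noteq> {} \<and> M' \<subseteq> M \<longrightarrow> ROG (Scone M \<inter> Tcone M')"
  then have "\<And>A. A \<in> M \<Longrightarrow> ROG (Scone M \<inter> Tcone {A})"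
    by blast
  then show "ROG (Scone M)"
    unfolding ROG_Scone_iff using \<open>compact M\<close> by (rule Scone_subset_hull_rank_one[rotated])
qed

end
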